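(* Let $B_J=L+U\in\mathbb R^{n\times n}$ with $\rho(B_J)>0$, where $L$ is strictly lower triangular and $U$ is strictly upper triangular, and suppose $L\ne O$ and $U\ne O$. Then $UL\ne O$ and $LU\ne O$.
   Context: $\rho$ denotes spectral radius. *)

theory Defs
  imports "Jordan_Normal_Form.Spectral_Radius"
begin

definition strictly_lower_tri :: "nat \<Rightarrow> real mat \<Rightarrow> bool" where
  "strictly_lower_tri n A \<longleftrightarrow> A \<in> carrier_mat n n \<and>
     (\<forall>i<n. \<forall>j<n. i \<le> j \<longrightarrow> A $$ (i, j) = 0)"

definition strictly_upper_tri :: "nat \<Rightarrow> real mat \<Rightarrow> bool" where
  "strictly_upper_tri n A \<longleftrightarrow> A \<in> carrier_mat n n \<and>
     (\<forall>i<n. \<forall>j<n. j \<le> i \<longrightarrow> A $$ (i, j) = 0)"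

definition real_spectral_radius :: "real mat \<Rightarrow> real" where
  "real_spectral_radius A = spectral_radius (map_mat complex_of_real A)"

end

theory Submission
  imports Defs
begin

text \<open>Strictly triangular matrices have no eigenvalue other than 0. If \<open>U L = 0\<close> and
\<open>(L + U) v = \<lambda> v\<close>, applying \<open>U\<close> gives \<open>U (U v) = \<lambda> U v\<close>: either \<open>U v \<noteq> 0\<close> is an
eigenvector of \<open>U\<close>, or \<open>L v = \<lambda> v\<close>. Either way \<open>\<lambda> = 0\<close>, so \<open>L + U\<close> would have
spectral radius 0; the case \<open>L U = 0\<close> is symmetric.\<close>

lemma eigenvalue_upper_triangular:
  fixes A :: "'a::field mat"
  assumes A: "A \<in> carrier_mat n n" and "upper_triangular A" and "eigenvalue A k"
  shows "k \<in> set (diag_mat A)"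
  using assms
  by (force simp: eigenvalue_root_char_poly[OF A] char_poly_upper_triangular[OF A] poly_prod_list)

lemma eigenvalue_strictly_upper_triangular:
  fixes A :: "'a::field mat"
  assumes A: "A \<in> carrier_mat n n" and upper: "\<forall>i<n. \<forall>j<n. j \<le> i \<longrightarrow> A $$ (i, j) = 0"
    and "eigenvalue A k"
  shows "k = 0"
proof -
  have "upper_triangular A"
    using A upper by (auto simp: upper_triangular_def)
  then have "k \<in> set (diag_mat A)"
    using eigenvalue_upper_triangular A \<open>eigenvalue A k\<close> by blast
  then show ?thesis
    using A upper by (auto simp: diag_mat_def)
qed

lemma eigenvalue_strictly_lower_triangular:
  fixes A :: "'a::field mat"
  assumes A: "A \<in> carrier_mat n n" and lower: "\<forall>i<n. \<forall>j<n. i \<le> j \<longrightarrow> A $$ (i, j) = 0"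
    and "eigenvalue A k"
  shows "k = 0"
proof (rule eigenvalue_strictly_upper_triangular)
  show "transpose_mat A \<in> carrier_mat n n"
    using A by simp
  show "\<forall>i<n. \<forall>j<n. j \<le> i \<longrightarrow> transpose_mat A $$ (i, j) = 0"
    using A lower by simp
  show "eigenvalue (transpose_mat A) k"
    using A \<open>eigenvalue A k\<close> by (simp add: eigenvalue_root_char_poly)
qed

lemma eigenvalue_add_mult_zero:
  fixes M N :: "'a::field mat"
  assumes M: "M \<in> carrier_mat n n" and N: "N \<in> carrier_mat n n"
    and MN: "M * N = 0\<^sub>m n n" and "eigenvalue (M + N) k"
  shows "eigenvalue M k \<or> eigenvalue N k"
proof -
  obtain v where v: "v \<in> carrier_vec n" "v \<noteq> 0\<^sub>v n" and eq: "M *\<^sub>v v + N *\<^sub>v v = k \<cdot>\<^sub>v v"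
    using \<open>eigenvalue (M + N) k\<close> M N
    by (auto simp: eigenvalue_def eigenvector_def add_mult_distrib_mat_vec)
  have "M *\<^sub>v (N *\<^sub>v v) = (M * N) *\<^sub>v v"
    using M N v by simp
  also have "\<dots> = 0\<^sub>v n"
    using MN v by (intro eq_vecI) (auto simp: mult_mat_vec_def scalar_prod_def)
  finally have MNv: "M *\<^sub>v (N *\<^sub>v v) = 0\<^sub>v n" .
  have "M *\<^sub>v (M *\<^sub>v v) = M *\<^sub>v (M *\<^sub>v v + N *\<^sub>v v)"
    using M N v MNv by (simp add: mult_add_distrib_mat_vec)
  also have "\<dots> = k \<cdot>\<^sub>v (M *\<^sub>v v)"
    using M v by (simp add: eq mult_mat_vec)
  finally have MMv: "M *\<^sub>v (M *\<^sub>v v) = k \<cdot>\<^sub>v (M *\<^sub>v v)" .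
  show ?thesis
  proof (cases "M *\<^sub>v v = 0\<^sub>v n")
    case True
    then have "N *\<^sub>v v = k \<cdot>\<^sub>v v"
      using eq N v by simp
    then show ?thesis
      using N v by (auto simp: eigenvalue_def eigenvector_def)
  next
    case False
    have "eigenvector M (M *\<^sub>v v) k"
      using False M v MMv by (auto simp: eigenvector_def)
    then show ?thesis
      by (auto simp: eigenvalue_def)
  qed
qed

lemma spectrum_of_real_triangular_sum:
  assumes lower: "strictly_lower_tri n L" and upper: "strictly_upper_tri n U"
    and zero_product: "U * L = 0\<^sub>m n n \<or> L * U = 0\<^sub>m n n"
  shows "spectrum (map_mat complex_of_real (L + U)) \<subseteq> {0}"
proof
  fix k assume "k \<in> spectrum (map_mat complex_of_real (L + U))"
  define cL where "cL = map_mat complex_of_real L"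
  define cU where "cU = map_mat complex_of_real U"
  have L: "L \<in> carrier_mat n n" and U: "U \<in> carrier_mat n n"
    using lower upper by (auto simp: strictly_lower_tri_def strictly_upper_tri_def)
  then have cL: "cL \<in> carrier_mat n n" and cU: "cU \<in> carrier_mat n n"
    by (auto simp: cL_def cU_def)
  have "map_mat complex_of_real (L + U) = cL + cU"
    using L U by (intro eq_matI) (auto simp: cL_def cU_def)
  then have eig_sum: "eigenvalue (cU + cL) k" "eigenvalue (cL + cU) k"
    using \<open>k \<in> spectrum _\<close> cL cU by (auto simp: spectrum_def comm_add_mat)
  have "cU * cL = 0\<^sub>m n n \<or> cL * cU = 0\<^sub>m n n"
    using zero_product L U
    by (auto simp: cL_def cU_def of_real_hom.mat_hom_mult[symmetric])
  then have "eigenvalue cL k \<or> eigenvalue cU k"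
    using eigenvalue_add_mult_zero[OF cU cL _ eig_sum(1)]
      eigenvalue_add_mult_zero[OF cL cU _ eig_sum(2)] by blast
  moreover have "eigenvalue cL k \<Longrightarrow> k = 0"
    using lower cL by (intro eigenvalue_strictly_lower_triangular) (auto simp: strictly_lower_tri_def cL_def)
  moreover have "eigenvalue cU k \<Longrightarrow> k = 0"
    using upper cU by (intro eigenvalue_strictly_upper_triangular) (auto simp: strictly_upper_tri_def cU_def)
  ultimately show "k \<in> {0}" by blast
qed

theorem lemma6p1:
  fixes n :: nat and L U :: "real mat"
  assumes "strictly_lower_tri n L"
    and "strictly_upper_tri n U"
    and "real_spectral_radius (L + U) > 0"
    and "L \<noteq> 0\<^sub>m n n"
    and "U \<noteq> 0\<^sub>m n n"
  shows "U * L \<noteq> 0\<^sub>m n n \<and> L * U \<noteq> 0\<^sub>m n n"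
proof (rule ccontr)
  assume "\<not> ?thesis"
  then have spectrum: "spectrum (map_mat complex_of_real (L + U)) \<subseteq> {0}"
    using spectrum_of_real_triangular_sum assms(1,2) by blast
  have L: "L \<in> carrier_mat n n" and U: "U \<in> carrier_mat n n"
    using assms(1,2) by (auto simp: strictly_lower_tri_def strictly_upper_tri_def)
  have "n > 0"
  proof (rule gr0I)
    assume "n = 0"
    with L have "L = 0\<^sub>m n n"
      by (intro eq_matI) auto
    with assms(4) show False ..
  qed
  then have "real_spectral_radius (L + U) \<in> norm ` spectrum (map_mat complex_of_real (L + U))"
    using L U unfolding real_spectral_radius_def by (intro spectral_radius_mem_max) auto
  with spectrum have "real_spectral_radius (L + U) = 0"
    by auto
  with assms(3) show False
    by simp
qed

end
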